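(* Let $T\in\mathbb{T}$. (a) Let $v_1,\dots,v_k$ be the non-pendant vertices of $T$, with $v_i$ adjacent to exactly $t_i$ pendant vertices. Then the degree of $v_i$ in $T^{\#}$ is $t_i$. (b) If $T$ is neither a star nor a corona tree, then $T^{\#}$ contains at least one cycle of length $4$.
   Context: $\mathbb{T}$ is the class of simple undirected weighted trees $T$ (nonzero real weights on edges) such that (i) $T$ has at least one non-pendant vertex, and (ii) every non-pendant vertex of $T$ is adjacent to at least one pendant vertex (a vertex of degree one). The adjacency matrix $A$ of $T$ has $(i,j)$ entry equal to the weight of edge $v_iv_j$, or $0$ if no edge; $A^{\#}$ is its group inverse (unique $X$ with $AXA=A$, $XAX=X$, $AX=XA$); $T^{\#}$ is the weighted graph on the vertex set of $T$ with $v_iv_j$ an edge iff $(A^{\#})_{ij}\neq 0$, weighted by that entry. A corona tree is a tree obtained from some tree by attaching one new pendant vertex to each of its vertices. *)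

theory Defs
  imports "HOL-Analysis.Analysis"
begin

definition weighted_simple_graph :: "('v \<Rightarrow> 'v \<Rightarrow> real) \<Rightarrow> bool" where
  "weighted_simple_graph w \<longleftrightarrow> (\<forall>i j. w i j = w j i) \<and> (\<forall>i. w i i = 0)"

definition wedge :: "('v \<Rightarrow> 'v \<Rightarrow> real) \<Rightarrow> 'v \<Rightarrow> 'v \<Rightarrow> bool" where
  "wedge w i j \<longleftrightarrow> w i j \<noteq> 0"

definition gdegree :: "('v \<Rightarrow> 'v \<Rightarrow> bool) \<Rightarrow> 'v \<Rightarrow> nat" where
  "gdegree G v = card {u. G v u}"

definition pendant :: "('v \<Rightarrow> 'v \<Rightarrow> bool) \<Rightarrow> 'v \<Rightarrow> bool" where
  "pendant G v \<longleftrightarrow> gdegree G v = 1"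

definition has_cycle_len_on :: "'v set \<Rightarrow> ('v \<Rightarrow> 'v \<Rightarrow> bool) \<Rightarrow> nat \<Rightarrow> bool" where
  "has_cycle_len_on V G k \<longleftrightarrow> (\<exists>xs. length xs = k \<and> k \<ge> 3 \<and> distinct xs \<and> set xs \<subseteq> V \<and>
       (\<forall>i. Suc i < k \<longrightarrow> G (xs ! i) (xs ! Suc i)) \<and> G (xs ! (k - 1)) (xs ! 0))"

definition connected_on :: "'v set \<Rightarrow> ('v \<Rightarrow> 'v \<Rightarrow> bool) \<Rightarrow> bool" where
  "connected_on V G \<longleftrightarrow>
     (\<forall>x\<in>V. \<forall>y\<in>V. (x, y) \<in> {(a, b). a \<in> V \<and> b \<in> V \<and> G a b}\<^sup>*)"

definition is_tree_on :: "'v set \<Rightarrow> ('v \<Rightarrow> 'v \<Rightarrow> bool) \<Rightarrow> bool" where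
  "is_tree_on V G \<longleftrightarrow> V \<noteq> {} \<and> connected_on V G \<and> (\<forall>k. \<not> has_cycle_len_on V G k)"

definition weighted_tree :: "('v::finite \<Rightarrow> 'v \<Rightarrow> real) \<Rightarrow> bool" where
  "weighted_tree w \<longleftrightarrow> weighted_simple_graph w \<and> is_tree_on UNIV (wedge w)"

definition class_T :: "('v::finite \<Rightarrow> 'v \<Rightarrow> real) \<Rightarrow> bool" where
  "class_T w \<longleftrightarrow> weighted_tree w \<and> (\<exists>v. \<not> pendant (wedge w) v) \<and>
     (\<forall>v. \<not> pendant (wedge w) v \<longrightarrow> (\<exists>u. wedge w v u \<and> pendant (wedge w) u))"

definition is_star :: "('v \<Rightarrow> 'v \<Rightarrow> bool) \<Rightarrow> bool" where
  "is_star G \<longleftrightarrow> (\<exists>c. \<forall>v. v \<noteq> c \<longrightarrow> G c v)"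

(* corona tree: obtained from a tree on S by attaching one new pendant vertex f s to each s \<in> S *)
definition is_corona :: "('v \<Rightarrow> 'v \<Rightarrow> bool) \<Rightarrow> bool" where
  "is_corona G \<longleftrightarrow> (\<exists>S f. bij_betw f S (UNIV - S) \<and> is_tree_on S G \<and>
       (\<forall>s\<in>S. \<forall>x. G (f s) x \<longleftrightarrow> x = s))"

definition adj_matrix :: "('v::finite \<Rightarrow> 'v \<Rightarrow> real) \<Rightarrow> real^'v^'v" where
  "adj_matrix w = (\<chi> i j. w i j)"

definition is_group_inverse :: "real^'n^'n \<Rightarrow> real^'n^'n \<Rightarrow> bool" where
  "is_group_inverse A X \<longleftrightarrow> A ** X ** A = A \<and> X ** A ** X = X \<and> A ** X = X ** A"

definition group_inverse :: "real^'n^'n \<Rightarrow> real^'n^'n" where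
  "group_inverse A = (THE X. is_group_inverse A X)"

(* weights of T^#: entries of A^#; graph T^# (simple, so no loops) *)
definition sharp_weight :: "('v::finite \<Rightarrow> 'v \<Rightarrow> real) \<Rightarrow> 'v \<Rightarrow> 'v \<Rightarrow> real" where
  "sharp_weight w i j = (if i = j then 0 else group_inverse (adj_matrix w) $ i $ j)"

end

theory Submission
  imports Defs
begin

text \<open>
  List the non-pendant vertices first. Then the adjacency matrix has the block form
  \<open>A = [[B, C], [C\<^sup>T, 0]]\<close>: pendant vertices of a tree in \<open>\<T>\<close> are never adjacent,
  and each of them has a single neighbour, its parent. Hence \<open>D = C C\<^sup>T\<close> is diagonal,
  with a positive entry at every non-pendant vertex, and one checks, using \<open>C C = 0\<close>,
  \<open>B C\<^sup>T = 0\<close>, \<open>C B = 0\<close> and the like, that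
  \<open>X = D\<^sup>-\<^sup>1 C + C\<^sup>T D\<^sup>-\<^sup>1 - C\<^sup>T D\<^sup>-\<^sup>1 B D\<^sup>-\<^sup>1 C\<close> is the group inverse of \<open>A\<close>.
  Reading off its entries: the row of a non-pendant vertex \<open>v\<close> is supported exactly on
  the pendant neighbours of \<open>v\<close>, which is (a); two pendant vertices whose parents are
  adjacent are adjacent in \<open>T\<^sup>#\<close>. If \<open>T\<close> is not a corona, some \<open>v\<close> has two pendant
  neighbours \<open>p\<^sub>1, p\<^sub>2\<close>; if \<open>T\<close> is not a star, \<open>v\<close> has a non-pendant neighbour \<open>u\<close>
  with a pendant neighbour \<open>q\<close>, and \<open>p\<^sub>1 q p\<^sub>2 v\<close> is a 4-cycle of \<open>T\<^sup>#\<close>, which is (b).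
\<close>

lemma matrix_add_rdistrib: "(B + C) ** A = B ** A + C ** A"
  by (vector matrix_matrix_mult_def sum.distrib[symmetric] field_simps)

lemma matrix_diff_ldistrib: "A ** (B - C) = A ** B - A ** C"
  for A :: "'a::ring_1^'n^'m"
  by (vector matrix_matrix_mult_def sum_subtractf[symmetric] field_simps)

lemma matrix_diff_rdistrib: "(B - C) ** A = B ** A - C ** A"
  for A :: "'a::ring_1^'n^'m"
  by (vector matrix_matrix_mult_def sum_subtractf[symmetric] field_simps)

lemma matrix_mul_eq_assoc: "X ** Y = Z \<Longrightarrow> X ** (Y ** M) = Z ** M"
  by (simp add: matrix_mul_assoc)

lemma matrix_mul_entry_single_left:
  fixes M :: "'a::semiring_1^'k^'m"
  assumes "\<And>k. k \<noteq> c \<Longrightarrow> M $ i $ k = 0"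
  shows "(M ** N) $ i $ j = M $ i $ c * N $ c $ j"
proof -
  have "(M ** N) $ i $ j = (\<Sum>k\<in>UNIV. M $ i $ k * N $ k $ j)"
    by (simp add: matrix_matrix_mult_def)
  also have "\<dots> = (\<Sum>k\<in>{c}. M $ i $ k * N $ k $ j)"
    by (rule sum.mono_neutral_right) (auto simp: assms)
  finally show ?thesis by simp
qed

lemma matrix_mul_entry_single_right:
  fixes N :: "'a::semiring_1^'n^'k"
  assumes "\<And>k. k \<noteq> c \<Longrightarrow> N $ k $ j = 0"
  shows "(M ** N) $ i $ j = M $ i $ c * N $ c $ j"
proof -
  have "(M ** N) $ i $ j = (\<Sum>k\<in>UNIV. M $ i $ k * N $ k $ j)"
    by (simp add: matrix_matrix_mult_def)
  also have "\<dots> = (\<Sum>k\<in>{c}. M $ i $ k * N $ k $ j)"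
    by (rule sum.mono_neutral_right) (auto simp: assms)
  finally show ?thesis by simp
qed

definition diag_mat :: "('n::finite \<Rightarrow> 'a::zero) \<Rightarrow> 'a^'n^'n" where
  "diag_mat f = (\<chi> i j. if i = j then f i else 0)"

lemma diag_mat_mult_left: "(diag_mat f ** M) $ i $ j = f i * M $ i $ j"
  for M :: "'a::semiring_1^'m^'n"
  by (simp add: diag_mat_def matrix_matrix_mult_def if_distrib if_distribR cong: if_cong)

lemma diag_mat_mult_right: "(M ** diag_mat f) $ i $ j = M $ i $ j * f j"
  for M :: "'a::semiring_1^'n^'m"
  by (simp add: diag_mat_def matrix_matrix_mult_def if_distrib if_distribR cong: if_cong)

lemma is_group_inverse_unique:
  assumes "is_group_inverse A X" "is_group_inverse A Y"
  shows "X = Y"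
proof -
  have X: "A ** X ** A = A" "X ** A ** X = X" "A ** X = X ** A"
    and Y: "A ** Y ** A = A" "Y ** A ** Y = Y" "A ** Y = Y ** A"
    using assms unfolding is_group_inverse_def by auto
  have "A ** X = X ** (A ** Y ** A)"
    using X(3) Y(1) by simp
  also have "\<dots> = (X ** A) ** (Y ** A)"
    by (simp add: matrix_mul_assoc)
  also have "\<dots> = (A ** X) ** (A ** Y)"
    using X(3) Y(3) by simp
  also have "\<dots> = (A ** X ** A) ** Y"
    by (simp add: matrix_mul_assoc)
  also have "\<dots> = A ** Y"
    using X(1) by simp
  finally have AX_AY: "A ** X = A ** Y" .
  have "X = (A ** X) ** X"
    using X(2,3) by simp
  also have "\<dots> = (Y ** A) ** X"
    using AX_AY Y(3) by simp
  also have "\<dots> = Y ** (A ** Y)"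
    by (simp add: matrix_mul_assoc[symmetric] AX_AY)
  also have "\<dots> = Y"
    using Y(2) by (simp add: matrix_mul_assoc)
  finally show ?thesis .
qed

lemma group_inverse_eqI: "is_group_inverse A X \<Longrightarrow> group_inverse A = X"
  unfolding group_inverse_def using is_group_inverse_unique by blast

lemma has_cycle_len_on_mono:
  "has_cycle_len_on V G k \<Longrightarrow> V \<subseteq> V' \<Longrightarrow> has_cycle_len_on V' G k"
  unfolding has_cycle_len_on_def by blast

lemma has_cycle_len_on_4I:
  assumes "distinct [a, b, c, d]" "G a b" "G b c" "G c d" "G d a"
  shows "has_cycle_len_on UNIV G 4"
  unfolding has_cycle_len_on_def
proof (intro exI[of _ "[a, b, c, d]"] conjI allI impI)
  show "G ([a, b, c, d] ! i) ([a, b, c, d] ! Suc i)" if "Suc i < 4" for i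
    using that assms by (auto simp: less_Suc_eq numeral_eq_Suc)
qed (use assms in auto)

section \<open>Pendant vertices of trees in \<open>\<T>\<close>\<close>

locale class_T_tree =
  fixes w :: "'v::finite \<Rightarrow> 'v \<Rightarrow> real"
  assumes class_T: "class_T w"
begin

abbreviation pend :: "'v \<Rightarrow> bool" where
  "pend v \<equiv> pendant (wedge w) v"

lemma weight_sym: "w i j = w j i"
  and weight_diag: "w i i = 0"
  using class_T unfolding class_T_def weighted_tree_def weighted_simple_graph_def by auto

lemma connected: "(x, y) \<in> {(a, b). w a b \<noteq> 0}\<^sup>*"
  using class_T unfolding class_T_def weighted_tree_def is_tree_on_def connected_on_def wedge_def
  by auto

lemma no_cycle: "\<not> has_cycle_len_on UNIV (wedge w) k"
  using class_T unfolding class_T_def weighted_tree_def is_tree_on_def by auto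

lemma ex_not_pend: "\<exists>v. \<not> pend v"
  using class_T unfolding class_T_def by auto

lemma not_pend_has_pend_neighbour: "\<not> pend v \<Longrightarrow> \<exists>u. w v u \<noteq> 0 \<and> pend u"
  using class_T unfolding class_T_def wedge_def by auto

lemma pend_neighbours: "pend p \<Longrightarrow> \<exists>a. \<forall>u. w p u \<noteq> 0 \<longleftrightarrow> u = a"
  unfolding pendant_def gdegree_def wedge_def by (simp add: card_1_singleton_iff set_eq_iff)

definition parent :: "'v \<Rightarrow> 'v" where
  "parent p = (SOME q. w p q \<noteq> 0)"

lemma parent_adj: "pend p \<Longrightarrow> w p (parent p) \<noteq> 0"
  unfolding parent_def by (rule someI_ex) (use pend_neighbours in blast)

lemma parent_unique: "pend p \<Longrightarrow> w p q \<noteq> 0 \<Longrightarrow> q = parent p"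
  using pend_neighbours parent_adj by metis

lemma adj_parent: "pend p \<Longrightarrow> w (parent p) p \<noteq> 0"
  using parent_adj weight_sym by metis

lemma parent_unique_left: "pend p \<Longrightarrow> w q p \<noteq> 0 \<Longrightarrow> q = parent p"
  using parent_unique weight_sym by metis

lemma parent_not_pend:
  assumes p: "pend p"
  shows "\<not> pend (parent p)"
proof
  assume q: "pend (parent p)"
  have pp: "parent (parent p) = p"
    using parent_unique_left[OF q parent_adj[OF p]] by simp
  have "y \<in> {p, parent p}" if "(p, y) \<in> {(a, b). w a b \<noteq> 0}\<^sup>*" for y
    using that
  proof induction
    case (step y z)
    then show ?case
      using parent_unique[OF p, of z] parent_unique[OF q, of z] pp by auto
  qed simp
  moreover obtain v where "\<not> pend v"
    using ex_not_pend by blast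
  ultimately show False
    using connected[of p v] p q by auto
qed

lemma pend_not_adj: "pend p \<Longrightarrow> pend q \<Longrightarrow> w p q = 0"
  using parent_unique parent_not_pend by blast

lemma not_pend_connected:
  assumes "\<not> pend x" "\<not> pend y"
  shows "(x, y) \<in> {(a, b). \<not> pend a \<and> \<not> pend b \<and> w a b \<noteq> 0}\<^sup>*"
proof -
  define R where "R = {(a, b). \<not> pend a \<and> \<not> pend b \<and> w a b \<noteq> 0}"
  \<comment> \<open>Walk along a path of \<open>T\<close>, replacing each pendant vertex by its parent.\<close>
  define proj where "proj y = (if pend y then parent y else y)" for y
  have "(x, proj z) \<in> R\<^sup>*" if "(x, z) \<in> {(a, b). w a b \<noteq> 0}\<^sup>*" for z
    using that
  proof induction
    case base
    then show ?case using assms(1) by (simp add: proj_def)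
  next
    case (step y z)
    then have yz: "w y z \<noteq> 0"
      by simp
    consider "pend y" | "pend z" | "\<not> pend y" "\<not> pend z"
      by blast
    then show ?case
    proof cases
      case 1
      then have "proj z = proj y"
        using parent_unique[OF 1 yz] parent_not_pend[OF 1] by (simp add: proj_def)
      then show ?thesis using step.IH by simp
    next
      case 2
      then have "proj z = proj y"
        using parent_unique_left[OF 2 yz] parent_not_pend[OF 2] by (simp add: proj_def)
      then show ?thesis using step.IH by simp
    next
      case 3
      then show ?thesis
        using step.IH yz by (simp add: proj_def R_def rtrancl.rtrancl_into_rtrancl)
    qed
  qed
  from this[OF connected[of x y]] show ?thesis
    using assms(2) by (simp add: proj_def R_def)
qed

definition pend_weight :: "'v \<Rightarrow> real" where
  "pend_weight v = (\<Sum>u\<in>UNIV. if pend u then (w v u)\<^sup>2 else 0)"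

lemma pend_weight_pos:
  assumes "\<not> pend v"
  shows "pend_weight v > 0"
proof -
  obtain u where u: "w v u \<noteq> 0" "pend u"
    using not_pend_has_pend_neighbour[OF assms] by blast
  have "0 < (if pend u then (w v u)\<^sup>2 else 0)"
    using u by simp
  also have "\<dots> \<le> pend_weight v"
    unfolding pend_weight_def by (rule member_le_sum) auto
  finally show ?thesis .
qed

section \<open>The group inverse of the adjacency matrix\<close>

text \<open>
  All matrices are indexed by the whole vertex set: the blocks \<open>B\<close>, \<open>C\<close>, \<open>C\<^sup>T\<close> are
  padded with zeros, \<open>Dpinv\<close> inverts \<open>D\<close> on the non-pendant coordinates and vanishes on
  the pendant ones, and \<open>Pmat\<close> is the projection onto the non-pendant coordinates.
\<close>

definition "Bmat = (\<chi> i j. if \<not> pend i \<and> \<not> pend j then w i j else 0)"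
definition "Cmat = (\<chi> i j. if \<not> pend i \<and> pend j then w i j else 0)"
definition "Ctmat = (\<chi> i j. if pend i \<and> \<not> pend j then w i j else 0)"
definition "Dmat = diag_mat (\<lambda>i. if pend i then 0 else pend_weight i)"
definition "Dpinv = diag_mat (\<lambda>i. if pend i then 0 else 1 / pend_weight i)"
definition "Pmat = diag_mat (\<lambda>i. if pend i then 0 else 1)"

definition "Xmat = Dpinv ** Cmat + Ctmat ** Dpinv - Ctmat ** (Dpinv ** (Bmat ** (Dpinv ** Cmat)))"

lemma Dpinv_mult_left: "(Dpinv ** M) $ i $ j = (if pend i then 0 else 1 / pend_weight i) * M $ i $ j"
  by (simp add: Dpinv_def diag_mat_mult_left)

lemma Dpinv_mult_right: "(M ** Dpinv) $ i $ j = M $ i $ j * (if pend j then 0 else 1 / pend_weight j)"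
  by (simp add: Dpinv_def diag_mat_mult_right)

lemma adj_matrix_blocks: "adj_matrix w = Bmat + Cmat + Ctmat"
  by (auto simp: vec_eq_iff adj_matrix_def Bmat_def Cmat_def Ctmat_def pend_not_adj)

lemma Cmat_Ctmat: "Cmat ** Ctmat = Dmat"
proof -
  have "(Cmat ** Ctmat) $ i $ j = Dmat $ i $ j" for i j
  proof (cases "\<not> pend i \<and> \<not> pend j")
    case nn: True
    show ?thesis
    proof (cases "i = j")
      case True
      have "w i k * w k i = (w i k)\<^sup>2" for k
        using weight_sym[of k i] by (simp add: power2_eq_square)
      with nn True show ?thesis
        by (auto simp: matrix_matrix_mult_def Cmat_def Ctmat_def Dmat_def diag_mat_def
            pend_weight_def intro!: sum.cong)
    next
      case False
      have "w i k * w k j = 0" if "pend k" for k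
        using parent_unique_left[OF that, of i] parent_unique[OF that, of j] False by auto
      with nn False show ?thesis
        by (auto simp: matrix_matrix_mult_def Cmat_def Ctmat_def Dmat_def diag_mat_def
            intro!: sum.neutral)
    qed
  next
    case False
    then show ?thesis
      by (auto simp: matrix_matrix_mult_def Cmat_def Ctmat_def Dmat_def diag_mat_def
          intro!: sum.neutral)
  qed
  then show ?thesis by (simp add: vec_eq_iff)
qed

lemma block_products_zero:
  "Bmat ** Ctmat = 0" "Cmat ** Cmat = 0" "Ctmat ** Ctmat = 0" "Cmat ** Bmat = 0"
  by (auto simp: vec_eq_iff matrix_matrix_mult_def Bmat_def Cmat_def Ctmat_def intro!: sum.neutral)

lemma block_products_diag:
  "Cmat ** Dpinv = 0" "Dpinv ** Ctmat = 0" "Pmat ** Ctmat = 0"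
  "Pmat ** Bmat = Bmat" "Bmat ** Pmat = Bmat" "Pmat ** Cmat = Cmat" "Ctmat ** Pmat = Ctmat"
  by (auto simp: vec_eq_iff diag_mat_mult_left diag_mat_mult_right
      Bmat_def Cmat_def Ctmat_def Dpinv_def Pmat_def)

lemma diag_products:
  "Dmat ** Dpinv = Pmat" "Dpinv ** Dmat = Pmat" "Dpinv ** Pmat = Dpinv" "Pmat ** Dpinv = Dpinv"
  unfolding Dmat_def Dpinv_def Pmat_def
  by (auto simp: vec_eq_iff diag_mat_mult_left, auto simp: diag_mat_def dest: pend_weight_pos)

lemmas block_products = block_products_zero block_products_diag diag_products Cmat_Ctmat

text \<open>
  The simplifier keeps products right-associated, so each identity \<open>X ** Y = Z\<close> is also
  needed in the form \<open>X ** (Y ** M) = Z ** M\<close>.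
\<close>

lemmas block_algebra =
  block_products block_products[THEN matrix_mul_eq_assoc]
  matrix_add_ldistrib matrix_add_rdistrib matrix_diff_ldistrib matrix_diff_rdistrib
  matrix_mul_assoc[symmetric]

lemma adj_matrix_Xmat: "adj_matrix w ** Xmat = Pmat + Ctmat ** (Dpinv ** Cmat)"
  unfolding adj_matrix_blocks Xmat_def by (simp add: block_algebra)

lemma Xmat_adj_matrix: "Xmat ** adj_matrix w = Pmat + Ctmat ** (Dpinv ** Cmat)"
  unfolding adj_matrix_blocks Xmat_def by (simp add: block_algebra)

lemma group_inverse_adj_matrix: "group_inverse (adj_matrix w) = Xmat"
proof (rule group_inverse_eqI)
  have "adj_matrix w ** Xmat ** adj_matrix w = adj_matrix w"
    unfolding adj_matrix_Xmat unfolding adj_matrix_blocks by (simp add: block_algebra)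
  moreover have "Xmat ** adj_matrix w ** Xmat = Xmat"
    unfolding Xmat_adj_matrix by (simp add: Xmat_def block_algebra)
  ultimately show "is_group_inverse (adj_matrix w) Xmat"
    unfolding is_group_inverse_def using adj_matrix_Xmat Xmat_adj_matrix by simp
qed

lemma sharp_weight_eq: "sharp_weight w i j = (if i = j then 0 else Xmat $ i $ j)"
  by (simp add: sharp_weight_def group_inverse_adj_matrix)

lemma Xmat_not_pend_row:
  assumes "\<not> pend v"
  shows "Xmat $ v $ u = (if pend u then w v u / pend_weight v else 0)"
proof -
  have "(Ctmat ** M) $ v $ u = 0" for M
    using assms by (simp add: matrix_matrix_mult_def Ctmat_def)
  then show ?thesis
    using assms by (simp add: Xmat_def Dpinv_mult_left Dpinv_mult_right
        Cmat_def Ctmat_def)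
qed

lemma Xmat_pend_not_pend:
  assumes "pend p" "\<not> pend v"
  shows "Xmat $ p $ v = w p v / pend_weight v"
proof -
  have "(Dpinv ** M) $ k $ v = 0" if "\<And>k. M $ k $ v = 0" for M k
    using that by (simp add: Dpinv_mult_left)
  moreover have "(Bmat ** (Dpinv ** Cmat)) $ k $ v = 0" for k
    using assms by (simp add: matrix_matrix_mult_def Dpinv_mult_left Cmat_def)
  ultimately have "(Ctmat ** (Dpinv ** (Bmat ** (Dpinv ** Cmat)))) $ p $ v = 0"
    by (simp add: matrix_matrix_mult_def)
  then show ?thesis
    using assms by (simp add: Xmat_def Dpinv_mult_left Dpinv_mult_right
        Cmat_def Ctmat_def)
qed

lemma Xmat_pend_pend:
  assumes p: "pend p" and q: "pend q"
  shows "Xmat $ p $ q = - (w p (parent p) * w (parent p) (parent q) * w (parent q) q)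
                          / (pend_weight (parent p) * pend_weight (parent q))"
proof -
  have Ct_left: "(Ctmat ** M) $ p $ q = w p (parent p) * M $ parent p $ q" for M
  proof -
    have "(Ctmat ** M) $ p $ q = Ctmat $ p $ parent p * M $ parent p $ q"
      by (rule matrix_mul_entry_single_left) (use p parent_unique[OF p] in \<open>auto simp: Ctmat_def\<close>)
    then show ?thesis
      using p parent_not_pend[OF p] by (simp add: Ctmat_def)
  qed
  have C_right: "(Bmat ** (Dpinv ** Cmat)) $ a $ q
      = Bmat $ a $ parent q * (Dpinv ** Cmat) $ parent q $ q" for a
  proof (rule matrix_mul_entry_single_right)
    fix k
    assume "k \<noteq> parent q"
    then have "w k q = 0"
      using parent_unique_left[OF q, of k] by auto
    then show "(Dpinv ** Cmat) $ k $ q = 0"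
      by (simp add: Dpinv_mult_left Cmat_def)
  qed
  have "(Ctmat ** (Dpinv ** (Bmat ** (Dpinv ** Cmat)))) $ p $ q
      = (w p (parent p) * w (parent p) (parent q) * w (parent q) q)
        / (pend_weight (parent p) * pend_weight (parent q))"
    using p q parent_not_pend[OF p] parent_not_pend[OF q]
    by (simp add: Ct_left Dpinv_mult_left C_right, simp add: Bmat_def Cmat_def Dpinv_mult_left)
  then show ?thesis
    using p q by (simp add: Xmat_def Dpinv_mult_left Dpinv_mult_right
        Cmat_def Ctmat_def)
qed

section \<open>The graph \<open>T\<^sup>#\<close>\<close>

lemma sharp_neighbours_not_pend:
  assumes "\<not> pend v"
  shows "{u. wedge (sharp_weight w) v u} = {u. wedge w v u \<and> pend u}"
  using assms weight_diag[of v] pend_weight_pos[OF assms]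
  by (auto simp: wedge_def sharp_weight_eq Xmat_not_pend_row)

lemma not_star_two_not_pend:
  assumes "\<not> is_star (wedge w)" "\<not> pend v"
  shows "\<exists>v'. \<not> pend v' \<and> v' \<noteq> v"
proof (rule ccontr)
  assume only_v: "\<nexists>v'. \<not> pend v' \<and> v' \<noteq> v"
  have "wedge w v u" if "u \<noteq> v" for u
  proof -
    have u: "pend u"
      using only_v that by blast
    then have "parent u = v"
      using only_v parent_not_pend by blast
    then show ?thesis
      using adj_parent[OF u] unfolding wedge_def by simp
  qed
  with assms(1) show False
    unfolding is_star_def by blast
qed

lemma not_corona_two_pend_neighbours:
  assumes "\<not> is_corona (wedge w)"
  shows "\<exists>v p\<^sub>1 p\<^sub>2. \<not> pend v \<and> pend p\<^sub>1 \<and> pend p\<^sub>2 \<and> p\<^sub>1 \<noteq> p\<^sub>2 \<and> w v p\<^sub>1 \<noteq> 0 \<and> w v p\<^sub>2 \<noteq> 0"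
proof (rule ccontr)
  assume two: "\<not> ?thesis"
  define S where "S = {v. \<not> pend v}"
  define f where "f v = (SOME u. w v u \<noteq> 0 \<and> pend u)" for v
  have f: "w v (f v) \<noteq> 0" "pend (f v)" if "\<not> pend v" for v
    using someI_ex[OF not_pend_has_pend_neighbour[OF that]] unfolding f_def by blast+
  have f_unique: "u = f v" if "\<not> pend v" "pend u" "w v u \<noteq> 0" for u v
    using two f[OF that(1)] that by blast
  have parent_f: "parent (f v) = v" if "\<not> pend v" for v
    using parent_unique_left[OF f(2)[OF that] f(1)[OF that]] by simp
  have "f ` S = UNIV - S"
  proof
    show "f ` S \<subseteq> UNIV - S"
      using f unfolding S_def by auto
    show "UNIV - S \<subseteq> f ` S"
    proof
      fix p
      assume "p \<in> UNIV - S"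
      then have p: "pend p"
        unfolding S_def by auto
      have "p = f (parent p)"
        using f_unique[OF parent_not_pend[OF p] p adj_parent[OF p]] .
      then show "p \<in> f ` S"
        using parent_not_pend[OF p] unfolding S_def by blast
    qed
  qed
  moreover have "inj_on f S"
    unfolding S_def by (rule inj_onI) (metis mem_Collect_eq parent_f)
  moreover have "is_tree_on S (wedge w)"
    unfolding is_tree_on_def
  proof (intro conjI allI)
    show "S \<noteq> {}"
      using ex_not_pend unfolding S_def by auto
    show "connected_on S (wedge w)"
      using not_pend_connected unfolding connected_on_def S_def wedge_def by simp
    show "\<not> has_cycle_len_on S (wedge w) k" for k
      using no_cycle has_cycle_len_on_mono by blast
  qed
  moreover have "\<forall>s\<in>S. \<forall>x. wedge w (f s) x \<longleftrightarrow> x = s"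
    using parent_unique[OF f(2)] parent_adj[OF f(2)] parent_f unfolding S_def wedge_def by auto
  ultimately have "is_corona (wedge w)"
    unfolding is_corona_def bij_betw_def by blast
  with assms show False by simp
qed

lemma sharp_4_cycle:
  assumes "\<not> is_star (wedge w)" "\<not> is_corona (wedge w)"
  shows "has_cycle_len_on UNIV (wedge (sharp_weight w)) 4"
proof -
  obtain v p\<^sub>1 p\<^sub>2 where v: "\<not> pend v" and p: "pend p\<^sub>1" "pend p\<^sub>2" "p\<^sub>1 \<noteq> p\<^sub>2"
    and vp: "w v p\<^sub>1 \<noteq> 0" "w v p\<^sub>2 \<noteq> 0"
    using not_corona_two_pend_neighbours[OF assms(2)] by blast
  obtain v' where v': "\<not> pend v'" "v' \<noteq> v"
    using not_star_two_not_pend[OF assms(1) v] by blast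
  obtain u where u: "\<not> pend u" "w v u \<noteq> 0"
    using not_pend_connected[OF v v'(1)] v'(2) by (cases rule: converse_rtranclE) auto
  obtain q where q: "pend q" "w u q \<noteq> 0"
    using not_pend_has_pend_neighbour[OF u(1)] by blast
  have parents: "parent p\<^sub>1 = v" "parent p\<^sub>2 = v" "parent q = u"
    using parent_unique_left[OF p(1) vp(1)] parent_unique_left[OF p(2) vp(2)]
      parent_unique_left[OF q] by simp_all
  have pos: "pend_weight v > 0" "pend_weight u > 0"
    using pend_weight_pos u(1) v by auto
  have "w u v \<noteq> 0" "w p\<^sub>1 v \<noteq> 0" "w p\<^sub>2 v \<noteq> 0" "w q u \<noteq> 0"
    using u(2) vp q(2) weight_sym[of u v] weight_sym[of p\<^sub>1 v] weight_sym[of p\<^sub>2 v]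
      weight_sym[of q u] by simp_all
  then have "Xmat $ p\<^sub>1 $ q \<noteq> 0" "Xmat $ q $ p\<^sub>2 \<noteq> 0" "Xmat $ p\<^sub>2 $ v \<noteq> 0" "Xmat $ v $ p\<^sub>1 \<noteq> 0"
    using u vp pos p q v parents
    by (simp_all add: Xmat_pend_pend Xmat_pend_not_pend Xmat_not_pend_row)
  moreover have "distinct [p\<^sub>1, q, p\<^sub>2, v]"
    using p q u v parents weight_diag[of v] by auto
  ultimately show ?thesis
    by (intro has_cycle_len_on_4I) (auto simp: wedge_def sharp_weight_eq)
qed

end

theorem corollary3p7:
  fixes w :: "'v::finite \<Rightarrow> 'v \<Rightarrow> real"
  assumes "class_T w"
  shows "(\<forall>v. \<not> pendant (wedge w) v \<longrightarrow>
            gdegree (wedge (sharp_weight w)) v = card {u. wedge w v u \<and> pendant (wedge w) u})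
       \<and> (\<not> is_star (wedge w) \<and> \<not> is_corona (wedge w) \<longrightarrow>
            has_cycle_len_on UNIV (wedge (sharp_weight w)) 4)"
proof -
  interpret class_T_tree w
    using assms by unfold_locales
  show ?thesis
    using sharp_neighbours_not_pend sharp_4_cycle unfolding gdegree_def by auto
qed

end
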